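(* Fix $p_{NS}=p_{min}\in(0,1)$. Let $P$ and $Q$ be semi-distributions on $\mathcal{I}=\{1,\dots,k\}$ with $P$ non-empty, and use the perfect NS-marker $\mathrm{isNS}_P$ with respect to $P$. Then $$\mathrm{LogLossNS}(Q\mid P)=H(\mathrm{DI}(P))+\mathrm{KL}_{NS}(P\,\|\,Q).$$
   Context: A semi-distribution (SD) on $\mathcal{I}$ is $W:\mathcal{I}\to[0,1]$ with $a(W):=\sum_i W(i)\le 1$; write $u(W):=1-a(W)$ and $\sup(W)=\{i:W(i)>0\}$; $W$ is non-empty if $a(W)>0$. Entropy: $H(D)=-\sum_i D(i)\ln D(i)$ (terms with $D(i)=0$ omitted). Drawing $o\sim P$ from a non-empty SD $P$: with probability $a(P)$, draw $o$ from the distribution $P/a(P)$; with probability $u(P)$, output a fresh unique "noise" item not in $\mathcal{I}$ (never generated before). The perfect NS-marker $\mathrm{isNS}_P(o)$ is true iff $o\notin\sup(P)$. $\mathrm{ScaleDrop}(W,\alpha,p_{min})$ is the SD $W'$ with $W'(i)=\alpha W(i)$ if $\alpha W(i)\ge p_{min}$ and $W'(i)=0$ otherwise. $\mathrm{FC}(W)$: let $W'=\mathrm{ScaleDrop}(W,1,p_{min})$; if $a(W')\le 1-p_{NS}$ return $W'$; otherwise return $\mathrm{ScaleDrop}(W',(1-p_{NS})/a(W'),p_{min})$. $\mathrm{loglossRuleNS}(o,W,m)$ for an observation $o$, map $W$ and Boolean $m$: let $W'=\mathrm{FC}(W)$ and $p=W'(o)$ (0 if $o$ is not in $\mathcal{I}$);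 if $p>0$ (equivalently $p\ge p_{min}$ and positive) return $-\ln p$; otherwise, if $m$ is false return $-\ln p_{NS}$, and if $m$ is true return $-\ln u(W')$. Then $\mathrm{LogLossNS}(Q\mid P):=\mathbb{E}_{o\sim P}[\mathrm{loglossRuleNS}(o,Q,\mathrm{isNS}_P(o))]$. Augmentation: for a non-empty SD $P$ on $\mathcal{I}$, $\mathrm{DI}(P)$ is the distribution on $\mathcal{I}\cup\{0\}$ with $\mathrm{DI}(P)(0)=u(P)$ and $\mathrm{DI}(P)(i)=P(i)$ for $i\in\mathcal{I}$. Bounded KL: $\mathrm{KL}_b(P\|Q):=\sum_{i\in\sup(P)}P(i)\ln\frac{P(i)}{\max(Q(i),p_{NS})}$, and $\mathrm{KL}_{NS}(P\|Q):=\mathrm{KL}_b(\mathrm{DI}(P)\,\|\,\mathrm{DI}(\mathrm{FC}(Q)))$. *)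

theory Defs
  imports Complex_Main
begin

text \<open>A semi-distribution is a function \<open>nat \<Rightarrow> real\<close>,
 of which only the values on \<open>{1..k}\<close> matter. Observations are \<open>nat option\<close>:
 \<open>Some i\<close> is the item i, \<open>None\<close> is a (fresh) noise item, not in \<open>{1..k}\<close>.\<close>

definition is_SD :: "nat \<Rightarrow> (nat \<Rightarrow> real) \<Rightarrow> bool" where
  "is_SD k W \<longleftrightarrow> (\<forall>i\<in>{1..k}. 0 \<le> W i \<and> W i \<le> 1) \<and> (\<Sum>i\<in>{1..k}. W i) \<le> 1"

definition aSD :: "nat \<Rightarrow> (nat \<Rightarrow> real) \<Rightarrow> real" where
  "aSD k W = (\<Sum>i\<in>{1..k}. W i)"

definition uSD :: "nat \<Rightarrow> (nat \<Rightarrow> real) \<Rightarrow> real" where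
  "uSD k W = 1 - aSD k W"

definition supSD :: "nat \<Rightarrow> (nat \<Rightarrow> real) \<Rightarrow> nat set" where
  "supSD k W = {i\<in>{1..k}. W i > 0}"

definition ScaleDrop :: "(nat \<Rightarrow> real) \<Rightarrow> real \<Rightarrow> real \<Rightarrow> (nat \<Rightarrow> real)" where
  "ScaleDrop W \<alpha> pmin = (\<lambda>i. if \<alpha> * W i \<ge> pmin then \<alpha> * W i else 0)"

definition FC :: "nat \<Rightarrow> real \<Rightarrow> real \<Rightarrow> (nat \<Rightarrow> real) \<Rightarrow> (nat \<Rightarrow> real)" where
  "FC k pNS pmin W =
     (let W' = ScaleDrop W 1 pmin in
      if aSD k W' \<le> 1 - pNS then W'
      else ScaleDrop W' ((1 - pNS) / aSD k W') pmin)"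

definition isNS :: "nat \<Rightarrow> (nat \<Rightarrow> real) \<Rightarrow> nat option \<Rightarrow> bool" where
  "isNS k P o' = (case o' of None \<Rightarrow> True | Some i \<Rightarrow> i \<notin> supSD k P)"

definition loglossRuleNS ::
  "nat \<Rightarrow> real \<Rightarrow> real \<Rightarrow> nat option \<Rightarrow> (nat \<Rightarrow> real) \<Rightarrow> bool \<Rightarrow> real" where
  "loglossRuleNS k pNS pmin o' W m =
     (let W' = FC k pNS pmin W;
          p = (case o' of None \<Rightarrow> 0 | Some i \<Rightarrow> if i \<in> {1..k} then W' i else 0)
      in if p > 0 then - ln p
         else if \<not> m then - ln pNS
         else - ln (uSD k W'))"

text \<open>Expectation over \<open>o \<sim> P\<close>: item i has probability \<open>a(P) \<cdot> P(i)/a(P) = P(i)\<close>,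
  a fresh noise item has probability \<open>u(P)\<close>.\<close>
definition LogLossNS :: "nat \<Rightarrow> real \<Rightarrow> real \<Rightarrow> (nat \<Rightarrow> real) \<Rightarrow> (nat \<Rightarrow> real) \<Rightarrow> real" where
  "LogLossNS k pNS pmin Q P =
     (\<Sum>i\<in>{1..k}. P i * loglossRuleNS k pNS pmin (Some i) Q (isNS k P (Some i)))
     + uSD k P * loglossRuleNS k pNS pmin None Q (isNS k P None)"

definition DI :: "nat \<Rightarrow> (nat \<Rightarrow> real) \<Rightarrow> (nat \<Rightarrow> real)" where
  "DI k P = (\<lambda>i. if i = 0 then uSD k P else P i)"

definition entropy :: "nat set \<Rightarrow> (nat \<Rightarrow> real) \<Rightarrow> real" where
  "entropy S D = - (\<Sum>i\<in>{i\<in>S. D i \<noteq> 0}. D i * ln (D i))"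

definition KL_b :: "real \<Rightarrow> nat set \<Rightarrow> (nat \<Rightarrow> real) \<Rightarrow> (nat \<Rightarrow> real) \<Rightarrow> real" where
  "KL_b pNS S P Q = (\<Sum>i\<in>{i\<in>S. P i > 0}. P i * ln (P i / max (Q i) pNS))"

definition KL_NS :: "nat \<Rightarrow> real \<Rightarrow> real \<Rightarrow> (nat \<Rightarrow> real) \<Rightarrow> (nat \<Rightarrow> real) \<Rightarrow> real" where
  "KL_NS k pNS pmin P Q = KL_b pNS {0..k} (DI k P) (DI k (FC k pNS pmin Q))"

end

theory Submission
  imports Defs
begin

text \<open>After the forecast correction FC, every positive probability is at least \<open>p\<^sub>m\<^sub>i\<^sub>n = p\<^sub>N\<^sub>S\<close>
  and the unassigned mass is at least \<open>p\<^sub>N\<^sub>S\<close>. Hence each observation o, read as an element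
  of \<open>{0..k}\<close> with 0 for noise, is charged exactly \<open>-ln (max (DI(FC Q)(o)) p\<^sub>N\<^sub>S)\<close>: an item
  that FC dropped costs \<open>-ln p\<^sub>N\<^sub>S\<close>, noise costs \<open>-ln u(FC Q)\<close>. So the expected loss is a bounded
  cross entropy of \<open>DI(P)\<close> against \<open>DI(FC Q)\<close>, which splits as entropy plus bounded KL divergence
  in the usual way.\<close>

definition cross_entropy_b :: "real \<Rightarrow> nat set \<Rightarrow> (nat \<Rightarrow> real) \<Rightarrow> (nat \<Rightarrow> real) \<Rightarrow> real" where
  "cross_entropy_b pNS S P Q = - (\<Sum>i\<in>S. P i * ln (max (Q i) pNS))"

lemma ScaleDrop_eq_0_or_ge: "ScaleDrop W \<alpha> pmin i = 0 \<or> pmin \<le> ScaleDrop W \<alpha> pmin i"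
  unfolding ScaleDrop_def by auto

lemma ScaleDrop_nonneg: "0 \<le> pmin \<Longrightarrow> 0 \<le> ScaleDrop W \<alpha> pmin i"
  unfolding ScaleDrop_def by auto

lemma aSD_ScaleDrop_le:
  assumes "0 \<le> \<alpha>" and "\<And>i. i \<in> {1..k} \<Longrightarrow> 0 \<le> W i"
  shows "aSD k (ScaleDrop W \<alpha> pmin) \<le> \<alpha> * aSD k W"
proof -
  have "aSD k (ScaleDrop W \<alpha> pmin) \<le> (\<Sum>i\<in>{1..k}. \<alpha> * W i)"
    unfolding aSD_def ScaleDrop_def by (rule sum_mono) (use assms in auto)
  then show ?thesis
    by (simp add: aSD_def sum_distrib_left)
qed

lemma FC_eq_0_or_ge: "FC k pNS pmin W i = 0 \<or> pmin \<le> FC k pNS pmin W i"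
  unfolding FC_def Let_def using ScaleDrop_eq_0_or_ge by auto

lemma aSD_FC_le:
  assumes "0 \<le> pmin" and "pNS \<le> 1"
  shows "aSD k (FC k pNS pmin W) \<le> 1 - pNS"
proof (cases "aSD k (ScaleDrop W 1 pmin) \<le> 1 - pNS")
  case True
  then show ?thesis
    unfolding FC_def Let_def by simp
next
  case False
  define W' where "W' = ScaleDrop W 1 pmin"
  have pos: "0 < aSD k W'"
    using False assms(2) unfolding W'_def by linarith
  have "aSD k (ScaleDrop W' ((1 - pNS) / aSD k W') pmin) \<le> (1 - pNS) / aSD k W' * aSD k W'"
    using pos assms by (intro aSD_ScaleDrop_le) (simp_all add: W'_def ScaleDrop_nonneg)
  also have "\<dots> = 1 - pNS"
    using pos by simp
  finally show ?thesis
    using False unfolding FC_def Let_def W'_def by simp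
qed

lemma uSD_FC_ge: "0 \<le> pmin \<Longrightarrow> pNS \<le> 1 \<Longrightarrow> pNS \<le> uSD k (FC k pNS pmin W)"
  using aSD_FC_le[of pmin pNS k W] unfolding uSD_def by linarith

lemma DI_nonneg: "is_SD k P \<Longrightarrow> i \<in> {0..k} \<Longrightarrow> 0 \<le> DI k P i"
  unfolding is_SD_def DI_def uSD_def aSD_def by auto

lemma cross_entropy_b_eq_entropy_add_KL_b:
  assumes "finite S" and "\<And>i. i \<in> S \<Longrightarrow> 0 \<le> P i" and "0 < pNS"
  shows "cross_entropy_b pNS S P Q = entropy S P + KL_b pNS S P Q"
proof -
  define Spos where "Spos = {i\<in>S. 0 < P i}"
  have entropy_set: "{i\<in>S. P i \<noteq> 0} = Spos"
    using assms(2) unfolding Spos_def by force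
  have "cross_entropy_b pNS S P Q = - (\<Sum>i\<in>Spos. P i * ln (max (Q i) pNS))"
    unfolding cross_entropy_b_def
    by (rule arg_cong[where f = uminus], rule sum.mono_neutral_right)
      (use assms(1,2) in \<open>force simp: Spos_def\<close>)+
  also have "\<dots> = - (\<Sum>i\<in>Spos. P i * ln (P i)) + (\<Sum>i\<in>Spos. P i * ln (P i / max (Q i) pNS))"
  proof -
    have "P i * ln (P i / max (Q i) pNS) = P i * ln (P i) - P i * ln (max (Q i) pNS)"
      if "i \<in> Spos" for i
      using that assms(3) by (simp add: Spos_def ln_div right_diff_distrib max_def)
    then show ?thesis
      by (simp add: sum_subtractf)
  qed
  finally show ?thesis
    unfolding entropy_def KL_b_def entropy_set Spos_def .
qed

lemma loglossRuleNS_item: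
  assumes "pNS = pmin" and "0 < pNS" and "i \<in> {1..k}"
  shows "loglossRuleNS k pNS pmin (Some i) Q False = - ln (max (FC k pNS pmin Q i) pNS)"
  using FC_eq_0_or_ge[of k pNS pmin Q i] assms
  unfolding loglossRuleNS_def by (auto simp: Let_def max_def)

lemma loglossRuleNS_noise: "loglossRuleNS k pNS pmin None Q True = - ln (uSD k (FC k pNS pmin Q))"
  unfolding loglossRuleNS_def by (simp add: Let_def)

lemma LogLossNS_eq_cross_entropy_b:
  assumes "pNS = pmin" and "0 < pNS" and "pNS \<le> 1" and "is_SD k P"
  shows "LogLossNS k pNS pmin Q P = cross_entropy_b pNS {0..k} (DI k P) (DI k (FC k pNS pmin Q))"
proof -
  define W where "W = FC k pNS pmin Q"
  define g where "g i = DI k P i * ln (max (DI k W i) pNS)" for i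
  have item: "P i * loglossRuleNS k pNS pmin (Some i) Q (isNS k P (Some i)) = - g i"
    if i: "i \<in> {1..k}" for i
  proof (cases "0 < P i")
    case True
    then have "\<not> isNS k P (Some i)"
      using i unfolding isNS_def supSD_def by auto
    then show ?thesis
      using i loglossRuleNS_item[OF assms(1,2) i] unfolding g_def DI_def W_def by simp
  next
    case False
    then have "P i = 0"
      using i assms(4) unfolding is_SD_def by force
    then show ?thesis
      using i unfolding g_def DI_def by simp
  qed
  have noise: "uSD k P * loglossRuleNS k pNS pmin None Q (isNS k P None) = - g 0"
    using uSD_FC_ge[of pmin pNS k Q] assms(1-3)
    unfolding g_def DI_def W_def by (simp add: isNS_def loglossRuleNS_noise)
  have "LogLossNS k pNS pmin Q P = - (g 0 + (\<Sum>i\<in>{1..k}. g i))"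
    unfolding LogLossNS_def using item noise by (simp add: sum_negf)
  also have "\<dots> = - (\<Sum>i\<in>{0..k}. g i)"
    by (simp add: sum.atLeast_Suc_atMost)
  finally show ?thesis
    unfolding cross_entropy_b_def g_def W_def .
qed

theorem lemma5:
  fixes k :: nat and pNS pmin :: real and P Q :: "nat \<Rightarrow> real"
  assumes "pNS = pmin" and "0 < pNS" and "pNS < 1"
    and "is_SD k P" and "is_SD k Q" and "aSD k P > 0"
  shows "LogLossNS k pNS pmin Q P = entropy {0..k} (DI k P) + KL_NS k pNS pmin P Q"
proof -
  have "LogLossNS k pNS pmin Q P = cross_entropy_b pNS {0..k} (DI k P) (DI k (FC k pNS pmin Q))"
    using assms(1-4) by (simp add: LogLossNS_eq_cross_entropy_b)
  also have "\<dots> = entropy {0..k} (DI k P) + KL_NS k pNS pmin P Q"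
    unfolding KL_NS_def
    using DI_nonneg[OF assms(4)] assms(2) by (intro cross_entropy_b_eq_entropy_add_KL_b) auto
  finally show ?thesis .
qed

end
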